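(* Let $N$ be a positive integer, let $\Delta\neq 1$ be a fundamental discriminant, $r\in\mathbb{Z}$ with $\Delta\equiv r^2\pmod{4N}$, $h\in\mathcal{D}$ and $\ell\in\mathrm{Iso}(V)$. If $\mathfrak{d}_{\Delta,r}(\ell,h)\neq 0$, then $p^2\mid N$ for every prime $p\mid\Delta$. In particular, if $N$ is square-free and $\Delta\neq 1$, then $\mathfrak{d}_{\Delta,r}(\ell,h)=0$ always.
   Context: $V$ is the space of trace-zero rational $2\times2$ matrices with $Q(\lambda)=N\det\lambda$ and $(\lambda,\mu)=-N\operatorname{tr}(\lambda\mu)$; $\mathrm{Iso}(V)$ is the set of isotropic lines in $V$. $L=\left\{\begin{pmatrix} b & -a/N\\ c & -b\end{pmatrix}: a,b,c\in\mathbb{Z}\right\}$, $L'=\left\{\begin{pmatrix} b/2N & -a/N\\ c & -b/2N\end{pmatrix}: a,b,c\in\mathbb{Z}\right\}$, $\mathcal{D}=L'/L$. For $\ell\in\mathrm{Iso}(V)$ let $\lambda_\ell$ be a primitive generator of $\ell\cap L$. For $k\in\mathcal{D}$ (viewed as a coset $L+k\subset L'$) put $\delta_\ell(k)=1$ if $\ell\cap(L+k)\neq\emptyset$ and $\delta_\ell(k)=0$ otherwise. If $\delta_\ell(k)=1$, then $\ell\cap(L+k)=\mathbb{Z}\lambda_\ell+k_\ell$ for some $k_\ell=s\lambda_\ell$, $s\in\mathbb{Q}$; writing $s=u/w$ in lowest terms ($w>0$) define $d(\ell,k)=w$ (it depends only on $\ell$ and $k$) and $k'_\ell=\frac{1}{d(\ell,k)}\lambda_\ell$.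 For $\delta=\begin{pmatrix} b/2N & -a/N\\ c & -b/2N\end{pmatrix}\in L'$, $\chi_\Delta(\delta)=\left(\frac{\Delta}{n}\right)$ if $\Delta\mid b^2-4Nac$, $(b^2-4Nac)/\Delta$ is a square mod $4N$ and $\gcd(a,b,c,\Delta)=1$ ($n$ any integer coprime to $\Delta$ represented by $[a,b,Nc]$), else $0$. For $\Delta\neq1$ define $\mathfrak{d}_{\Delta,r}(\ell,h)=\chi_\Delta((rh)'_\ell)$ if $\delta_\ell(rh)=1$ and $\Delta\mid d(\ell,rh)$, and $\mathfrak{d}_{\Delta,r}(\ell,h)=0$ otherwise. *)

theory Defs
  imports "HOL-Number_Theory.Number_Theory" "HOL-Computational_Algebra.Squarefree"
begin

text \<open>Elements of V (trace-zero rational 2x2 matrices): the triple (x, y, z) stands for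
  the matrix with rows (x, y) and (z, -x).\<close>
type_synonym tzmat = "rat \<times> rat \<times> rat"

definition tz_smult :: "rat \<Rightarrow> tzmat \<Rightarrow> tzmat" where
  "tz_smult t v = (case v of (x, y, z) \<Rightarrow> (t * x, t * y, t * z))"

definition tz_add :: "tzmat \<Rightarrow> tzmat \<Rightarrow> tzmat" where
  "tz_add v w = (case v of (x, y, z) \<Rightarrow> case w of (x', y', z') \<Rightarrow> (x + x', y + y', z + z'))"

definition tz_det :: "tzmat \<Rightarrow> rat" where
  "tz_det v = (case v of (x, y, z) \<Rightarrow> - x * x - y * z)"

definition QV :: "nat \<Rightarrow> tzmat \<Rightarrow> rat" where
  "QV N v = of_nat N * tz_det v"

definition IsoV :: "nat \<Rightarrow> tzmat set set" where
  "IsoV N = {l. \<exists>v. v \<noteq> (0, 0, 0) \<and> QV N v = 0 \<and> l = range (\<lambda>t. tz_smult t v)}"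

text \<open>The lattice L: b, c integers, upper right entry -a/N with a integer.\<close>
definition Lat :: "nat \<Rightarrow> tzmat set" where
  "Lat N = {(x, y, z). x \<in> \<int> \<and> of_nat N * y \<in> \<int> \<and> z \<in> \<int>}"

definition Lat' :: "nat \<Rightarrow> tzmat set" where
  "Lat' N = {(x, y, z). 2 * of_nat N * x \<in> \<int> \<and> of_nat N * y \<in> \<int> \<and> z \<in> \<int>}"

definition coset :: "nat \<Rightarrow> tzmat \<Rightarrow> tzmat set" where
  "coset N k = {tz_add w k | w. w \<in> Lat N}"

definition prim_gen :: "nat \<Rightarrow> tzmat set \<Rightarrow> tzmat \<Rightarrow> bool" where
  "prim_gen N l lam \<longleftrightarrow> lam \<noteq> (0, 0, 0) \<and> lam \<in> l \<inter> Lat N \<and>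
      l \<inter> Lat N = range (\<lambda>m::int. tz_smult (of_int m) lam)"

definition delta_l :: "nat \<Rightarrow> tzmat set \<Rightarrow> tzmat \<Rightarrow> int" where
  "delta_l N l k = (if l \<inter> coset N k \<noteq> {} then 1 else 0)"

text \<open>d(l,k): the denominator (in lowest terms, positive) of s, where s * lam_l lies in
  l \<inter> (L + k).\<close>
definition dlk :: "nat \<Rightarrow> tzmat \<Rightarrow> tzmat \<Rightarrow> int" where
  "dlk N lam k = snd (quotient_of (SOME s. tz_smult s lam \<in> coset N k))"

definition kron_prime :: "int \<Rightarrow> nat \<Rightarrow> int" where
  "kron_prime D p = (if p = 2 then (if even D then 0 else if D mod 8 \<in> {1, 7} then 1 else -1)
                     else Legendre D (int p))"

definition kronecker :: "int \<Rightarrow> int \<Rightarrow> int" where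
  "kronecker D n = (if n = 0 then (if \<bar>D\<bar> = 1 then 1 else 0)
     else (if n < 0 \<and> D < 0 then -1 else 1) *
          (\<Prod>p\<in>prime_factors (nat \<bar>n\<bar>). kron_prime D p ^ multiplicity p (nat \<bar>n\<bar>)))"

definition fundamental_disc :: "int \<Rightarrow> bool" where
  "fundamental_disc D \<longleftrightarrow> (D mod 4 = 1 \<and> squarefree D) \<or>
     (\<exists>m. D = 4 * m \<and> m mod 4 \<in> {2, 3} \<and> squarefree m)"

text \<open>The generalized genus character chi_Delta on L'. An element of L' is written
  (b/2N, -a/N, c); outside L' we put 0 (it is only applied to elements of L').\<close>
definition chi :: "nat \<Rightarrow> int \<Rightarrow> tzmat \<Rightarrow> int" where
  "chi N D v = (case v of (x, y, z) \<Rightarrow>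
     if v \<in> Lat' N then
       (let a = \<lfloor>- of_nat N * y\<rfloor>; b = \<lfloor>2 * of_nat N * x\<rfloor>; c = \<lfloor>z\<rfloor>;
            disc = b^2 - 4 * int N * a * c in
        if D dvd disc \<and> (\<exists>t. [disc div D = t^2] (mod (4 * int N))) \<and> gcd (gcd a b) (gcd c D) = 1
        then kronecker D (SOME n. coprime n D \<and> (\<exists>s t. n = a * s^2 + b * s * t + int N * c * t^2))
        else 0)
     else 0)"

definition frakd :: "nat \<Rightarrow> int \<Rightarrow> int \<Rightarrow> tzmat set \<Rightarrow> tzmat \<Rightarrow> tzmat \<Rightarrow> int" where
  "frakd N D r l lam h =
     (let k = tz_smult (of_int r) h in
      if delta_l N l k = 1 \<and> D dvd dlk N lam k
      then chi N D (tz_smult (1 / of_int (dlk N lam k)) lam) else 0)"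

end

theory Submission
  imports Defs
begin

text \<open>Write \<open>\<lambda>\<^sub>\<ell> = (b, a/N, c)\<close> with \<open>a, b, c\<close> integers; isotropy says
  \<open>N b\<^sup>2 = -a c\<close>. If \<open>\<Delta> | d(\<ell>, rh)\<close> and \<open>\<lambda>\<^sub>\<ell>/d(\<ell>, rh) \<in> L'\<close>, then every prime
  \<open>p | \<Delta>\<close> divides \<open>a\<close> and \<open>c\<close>. Primitivity of \<open>\<lambda>\<^sub>\<ell>\<close> forbids \<open>p | b\<close> (else
  \<open>\<lambda>\<^sub>\<ell>/p \<in> \<ell> \<inter> L\<close>), so \<open>p\<^sup>2 | a c = -N b\<^sup>2\<close> with \<open>p \<nmid> b\<close> gives \<open>p\<^sup>2 | N\<close>.
  A fundamental discriminant \<open>\<noteq> 1\<close> has a prime divisor, which excludes square-free \<open>N\<close>.\<close>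

lemma tz_smult_smult: "tz_smult s (tz_smult t v) = tz_smult (s * t) v"
  by (cases v) (simp add: tz_smult_def)

lemma tz_smult_cancel_right:
  assumes "tz_smult s v = tz_smult t v" "v \<noteq> (0, 0, 0)"
  shows "s = t"
  using assms by (cases v) (auto simp: tz_smult_def)

lemma IsoV_smult_closed:
  assumes "l \<in> IsoV N" "w \<in> l"
  shows "tz_smult t w \<in> l"
  using assms by (auto simp: IsoV_def tz_smult_smult)

lemma tz_det_smult: "tz_det (tz_smult t v) = t^2 * tz_det v"
  by (cases v) (simp add: tz_det_def tz_smult_def algebra_simps power2_eq_square)

lemma IsoV_det_eq_0:
  assumes "N > 0" "l \<in> IsoV N" "w \<in> l"
  shows "tz_det w = 0"
proof -
  obtain v where v: "QV N v = 0" "l = range (\<lambda>t. tz_smult t v)"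
    using assms(2) by (auto simp: IsoV_def)
  then obtain t where "w = tz_smult t v" using assms(3) by auto
  moreover have "tz_det v = 0" using v(1) assms(1) by (simp add: QV_def)
  ultimately show ?thesis by (simp add: tz_det_smult)
qed

lemma prim_gen_divided_in_Lat_imp_unit:
  assumes "l \<in> IsoV N" "prim_gen N l lam" "m \<noteq> 0" "tz_smult (1 / of_int m) lam \<in> Lat N"
  shows "is_unit m"
proof -
  have lam: "lam \<noteq> (0, 0, 0)" "lam \<in> l"
    and gen: "l \<inter> Lat N = range (\<lambda>k::int. tz_smult (of_int k) lam)"
    using assms(2) by (auto simp: prim_gen_def)
  have "tz_smult (1 / of_int m) lam \<in> l \<inter> Lat N"
    using assms(1,4) lam(2) IsoV_smult_closed by blast
  then obtain k where "tz_smult (1 / of_int m) lam = tz_smult (of_int k) lam"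
    using gen by auto
  hence "1 / of_int m = (of_int k :: rat)" using lam(1) by (rule tz_smult_cancel_right)
  hence "m * k = 1"
    using assms(3) by (simp add: field_simps flip: of_int_mult of_int_eq_iff)
  thus ?thesis by (metis dvd_triv_left)
qed

lemma frakd_nonzero_imp_denominator:
  assumes "frakd N D r l lam h \<noteq> 0"
  obtains d where "d > 0" "D dvd d" "tz_smult (1 / of_int d) lam \<in> Lat' N"
proof -
  define d where "d = dlk N lam (tz_smult (of_int r) h)"
  have "d > 0" unfolding d_def dlk_def using quotient_of_denom_pos' by blast
  moreover from assms have "D dvd d" and "chi N D (tz_smult (1 / of_int d) lam) \<noteq> 0"
    unfolding frakd_def d_def Let_def by (auto split: if_splits)
  moreover from this(2) have "tz_smult (1 / of_int d) lam \<in> Lat' N"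
    unfolding chi_def by (auto split: prod.splits if_splits)
  ultimately show ?thesis using that by blast
qed

lemma prime_square_dvd_if_isotropic_form:
  fixes n a b c p :: "'a :: factorial_ring_gcd"
  assumes "n * b^2 = - (a * c)" "prime p" "p dvd a" "p dvd c" "\<not> p dvd b"
  shows "p^2 dvd n"
proof -
  have "p^2 dvd n * b^2"
    using assms(1,3,4) by (simp add: power2_eq_square mult_dvd_mono)
  moreover have "coprime (p^2) (b^2)"
    using assms(2,5) by (simp add: prime_imp_coprime)
  ultimately show ?thesis by (simp add: coprime_dvd_mult_left_iff)
qed

lemma prime_square_dvd_level_if_frakd_nonzero:
  assumes "N > 0" "l \<in> IsoV N" "prim_gen N l lam" "frakd N D r l lam h \<noteq> 0"
    and "prime p" "p dvd D"
  shows "p^2 dvd int N"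
proof -
  obtain d where "d > 0" "D dvd d" and scaled: "tz_smult (1 / of_int d) lam \<in> Lat' N"
    using assms(4) by (rule frakd_nonzero_imp_denominator)
  obtain x y z where lam: "lam = (x, y, z)" by (cases lam)
  have "lam \<in> Lat N" using assms(3) by (simp add: prim_gen_def)
  then obtain a b c where abc: "x = of_int b" "of_nat N * y = of_int a" "z = of_int c"
    by (auto simp: Lat_def lam elim!: Ints_cases)
  from scaled have "of_int a / of_int d \<in> (\<int> :: rat set)" "of_int c / of_int d \<in> (\<int> :: rat set)"
    by (simp_all add: Lat'_def tz_smult_def lam flip: abc)
  hence "d dvd a" "d dvd c" using \<open>d > 0\<close> by (simp_all add: of_int_div_of_int_in_Ints_iff)
  hence pa: "p dvd a" and pc: "p dvd c"
    using assms(6) \<open>D dvd d\<close> by (meson dvd_trans)+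
  have pb: "\<not> p dvd b"
  proof
    assume "p dvd b"
    hence "tz_smult (1 / of_int p) lam \<in> Lat N"
      using pa pc abc by (simp add: Lat_def tz_smult_def lam of_int_div_of_int_in_Ints_iff)
    moreover have "p \<noteq> 0" using assms(5) by auto
    ultimately have "is_unit p"
      using prim_gen_divided_in_Lat_imp_unit[OF assms(2,3)] by blast
    thus False using assms(5) by (simp add: not_prime_unit)
  qed
  have "int N * b^2 = - (a * c)"
  proof -
    have "tz_det lam = 0" using assms(1,2,3) IsoV_det_eq_0 by (auto simp: prim_gen_def)
    hence "x * x = - (y * z)" by (simp add: tz_det_def lam)
    have "(of_int (int N * b^2) :: rat) = of_nat N * (x * x)"
      by (simp add: abc power2_eq_square)
    also have "\<dots> = - ((of_nat N * y) * z)" using \<open>x * x = - (y * z)\<close> by simp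
    also have "\<dots> = of_int (- (a * c))" by (simp add: abc)
    finally have "(of_int (int N * b^2) :: rat) = of_int (- (a * c))" .
    thus ?thesis by (simp only: of_int_eq_iff)
  qed
  from this assms(5) pa pc pb show ?thesis by (rule prime_square_dvd_if_isotropic_form)
qed

lemma fundamental_disc_has_prime_divisor:
  assumes "fundamental_disc D" "D \<noteq> 1"
  obtains p :: int where "prime p" "p dvd D"
proof -
  have "D \<noteq> 0" "\<not> is_unit D"
    using assms by (auto simp: fundamental_disc_def abs_if split: if_splits)
  thus ?thesis using that prime_divisor_exists by blast
qed

lemma squarefree_nat_imp_not_prime_square_dvd:
  assumes "squarefree N" "prime (p :: int)"
  shows "\<not> p^2 dvd int N"
proof
  assume "p^2 dvd int N"
  moreover obtain n where n: "p = int n"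
    using prime_ge_0_int[OF assms(2)] nonneg_int_cases by blast
  ultimately have "n^2 dvd N" by (simp flip: of_nat_power)
  hence "is_unit n" by (rule squarefreeD[OF assms(1)])
  thus False using assms(2) n by simp
qed

theorem proposition5p4:
  fixes N :: nat and D r :: int and h lam :: tzmat and l :: "tzmat set"
  assumes "N > 0"
    and "fundamental_disc D" and "D \<noteq> 1"
    and "[D = r^2] (mod (4 * int N))"
    and "h \<in> Lat' N"
    and "l \<in> IsoV N"
    and "prim_gen N l lam"
  shows "(frakd N D r l lam h \<noteq> 0 \<longrightarrow> (\<forall>p::int. prime p \<longrightarrow> p dvd D \<longrightarrow> p^2 dvd int N))
       \<and> (squarefree N \<longrightarrow> frakd N D r l lam h = 0)"
proof -
  have prime_squares: "p^2 dvd int N"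
    if "frakd N D r l lam h \<noteq> 0" "prime p" "p dvd D" for p
    using prime_square_dvd_level_if_frakd_nonzero[OF assms(1,6,7) that] .
  obtain p where "prime p" "p dvd D"
    using assms(2,3) by (rule fundamental_disc_has_prime_divisor)
  hence "squarefree N \<Longrightarrow> frakd N D r l lam h = 0"
    using prime_squares squarefree_nat_imp_not_prime_square_dvd by blast
  with prime_squares show ?thesis by blast
qed

end
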